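(* Let $n,m\ge1$ and $\vec w\in\hat N^{n+m}$. Then there exist unique $\vec u\in\hat N^n$ and $\vec v\in\hat N^m$ such that $\vec u\nearrow\vec v\le\vec w\le\vec u\nwarrow\vec v$ (componentwise). Consequently the intervals $[\vec u\nearrow\vec v,\vec u\nwarrow\vec v]$, $(\vec u,\vec v)\in\hat N^n\times\hat N^m$, form a partition of $\hat N^{n+m}$.
   Context: $\hat N^n$ ($n\ge1$) is the set of names of planar rooted binary trees with $n$ internal vertices: writing a tree as a complete expression (full binary parenthesization, outermost product included) of $x_1\cdots x_{n+1}$, its name $\vec v\in\mathbb N^n$ has $v_i=i$ if at least one left parenthesis stands immediately left of $x_i$, and otherwise $v_i=j$ where the rightmost of the right parentheses immediately following $x_i$ matches a left parenthesis in the run immediately preceding $x_j$. For $\vec u\in\hat N^n,\vec v\in\hat N^m$: $\vec u\nearrow\vec v=(\vec u,n\triangleright v_1,\dots,n\triangleright v_m)$ with $n\triangleright a=a+n$ for $a\neq1$, $n\triangleright1=1$, and $\vec u\nwarrow\vec v=(u_1,\dots,u_n,v_1+n,\dots,v_m+n)$. Componentwise order: $\vec a\le\vec b$ iff $a_i\le b_i$ for all $i$; intervals are taken inside $\hat N^{n+m}$. *)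

theory Defs
  imports Main
begin

text \<open>A tree is written as a complete
  expression in the leaves x_1, ..., x_(k+1), numbered left to right: a leaf is a
  variable x_i, and an internal vertex with subtrees l, r is the parenthesised
  product (l r).\<close>

datatype btree = Leaf | Node btree btree

fun internal :: "btree \<Rightarrow> nat" where
  "internal Leaf = 0"
| "internal (Node l r) = Suc (internal l + internal r)"

fun leaves :: "btree \<Rightarrow> nat" where
  "leaves Leaf = 1"
| "leaves (Node l r) = leaves l + leaves r"

text \<open>spans t k: with the leaves of t numbered starting at k, the set of pairs (lo, hi)
  such that some internal vertex of t is written as a parenthesised expression
  "( x_lo ... x_hi )", i.e. there is a matching pair of parentheses whose left
  parenthesis lies in the run immediately preceding x_lo and whose right parenthesis
  lies in the run immediately following x_hi.\<close>

fun spans :: "btree \<Rightarrow> nat \<Rightarrow> (nat \<times> nat) set" where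
  "spans Leaf k = {}"
| "spans (Node l r) k =
     insert (k, k + leaves l + leaves r - 1) (spans l k \<union> spans r (k + leaves l))"

text \<open>The name of a tree with n internal vertices: v_i = i if some left parenthesis
  stands immediately left of x_i; otherwise the right parentheses immediately after x_i
  correspond to the spans (lo, i), the rightmost of them is the outermost one, i.e.
  the one with least lo, and its left parenthesis is in the run preceding x_lo.\<close>

definition name_entry :: "btree \<Rightarrow> nat \<Rightarrow> nat" where
  "name_entry t i =
     (if \<exists>h. (i, h) \<in> spans t 1 then i else Min {lo. (lo, i) \<in> spans t 1})"

definition tree_name :: "btree \<Rightarrow> nat list" where
  "tree_name t = map (name_entry t) [1..<internal t + 1]"

definition Nhat :: "nat \<Rightarrow> nat list set" where
  "Nhat n = {tree_name t | t. internal t = n}"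

definition tri :: "nat \<Rightarrow> nat \<Rightarrow> nat" where
  "tri n a = (if a = 1 then 1 else a + n)"

definition nearr :: "nat list \<Rightarrow> nat list \<Rightarrow> nat list" where
  "nearr u v = u @ map (tri (length u)) v"

definition nwarr :: "nat list \<Rightarrow> nat list \<Rightarrow> nat list" where
  "nwarr u v = u @ map (\<lambda>a. a + length u) v"

definition cw_le :: "nat list \<Rightarrow> nat list \<Rightarrow> bool" where
  "cw_le a b = list_all2 (\<le>) a b"

definition Nint :: "nat \<Rightarrow> nat list \<Rightarrow> nat list \<Rightarrow> nat list set" where
  "Nint k a b = {w \<in> Nhat k. cw_le a w \<and> cw_le w b}"

end

theory Submission
  imports Defs
begin

text \<open>The name of a product tree is read off its factors: the name of Node l r
  is the name of l, then the entry 1 (the outermost parenthesis opens before x_1), then the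
  name of r with every entry shifted by the number of leaves of l.  Consequently both the first
  n entries of a name w in Nhat (n + m) and its last m entries with tri n undone are again
  names.  Since the intervals [tri n a, a + n] for a = 1, 2, ... partition the positive
  integers, the two inequalities force u to be the first part and v the second part of w.\<close>

lemma leaves_eq_Suc_internal: "leaves t = Suc (internal t)"
  by (induction t) auto

lemma spans_Node_internal:
  "spans (Node l r) k =
     insert (k, k + internal (Node l r)) (spans l k \<union> spans r (Suc (k + internal l)))"
  by (simp add: leaves_eq_Suc_internal ac_simps)

declare spans.simps(2) [simp del] spans_Node_internal [simp]

lemma spans_boundsD:
  "(lo, hi) \<in> spans t k \<Longrightarrow> k \<le> lo \<and> lo < hi \<and> hi \<le> k + internal t"
  by (induction t arbitrary: k) fastforce+

lemma finite_spans: "finite (spans t k)"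
  by (induction t arbitrary: k) auto

text \<open>name_entry t = name_entry_from t 1; the offset k is the number of the
  leftmost leaf, so that a subtree can be read inside its parent tree.\<close>

definition name_entry_from :: "btree \<Rightarrow> nat \<Rightarrow> nat \<Rightarrow> nat" where
  "name_entry_from t k i =
     (if \<exists>h. (i, h) \<in> spans t k then i else Min {lo. (lo, i) \<in> spans t k})"

lemma name_entry_from_Node_left:
  assumes "k \<le> i" "i < k + internal l"
  shows "name_entry_from (Node l r) k i = name_entry_from l k i"
proof -
  have "l \<noteq> Leaf" using assms by auto
  then have "(k, k + internal l) \<in> spans l k" by (cases l) auto
  then have "(\<exists>h. (i, h) \<in> spans (Node l r) k) \<longleftrightarrow> (\<exists>h. (i, h) \<in> spans l k)"
    using assms by (auto dest: spans_boundsD)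
  moreover have "{lo. (lo, i) \<in> spans (Node l r) k} = {lo. (lo, i) \<in> spans l k}"
    using assms by (auto dest: spans_boundsD)
  ultimately show ?thesis by (simp add: name_entry_from_def)
qed

lemma name_entry_from_Node_root: "name_entry_from (Node l r) k (k + internal l) = k"
proof (cases l)
  case Leaf
  then show ?thesis by (auto simp: name_entry_from_def)
next
  case (Node l1 l2)
  let ?Lo = "{lo. (lo, k + internal l) \<in> spans (Node l r) k}"
  have "\<not> (\<exists>h. (k + internal l, h) \<in> spans (Node l r) k)"
    using Node by (auto dest: spans_boundsD)
  moreover have "Min ?Lo = k"
  proof (rule Min_eqI)
    show "finite ?Lo"
      using finite_imageI [OF finite_spans [of "Node l r" k], of fst] by (rule finite_subset [rotated]) force
    show "k \<in> ?Lo" using Node by auto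
  qed (auto dest: spans_boundsD)
  ultimately show ?thesis by (simp add: name_entry_from_def)
qed

lemma name_entry_from_Node_right:
  assumes "Suc (k + internal l) \<le> i" "i < k + internal (Node l r)"
  shows "name_entry_from (Node l r) k i = name_entry_from r (Suc (k + internal l)) i"
proof -
  have "(\<exists>h. (i, h) \<in> spans (Node l r) k) \<longleftrightarrow> (\<exists>h. (i, h) \<in> spans r (Suc (k + internal l)))"
    using assms by (auto dest: spans_boundsD)
  moreover have "{lo. (lo, i) \<in> spans (Node l r) k} = {lo. (lo, i) \<in> spans r (Suc (k + internal l))}"
    using assms by (auto dest: spans_boundsD)
  ultimately show ?thesis by (simp add: name_entry_from_def)
qed

lemma map_name_entry_from_Node:
  "map (name_entry_from (Node l r) k) [k..<internal (Node l r) + k] =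
     map (name_entry_from l k) [k..<internal l + k] @ k #
     map (name_entry_from r (Suc (k + internal l))) [Suc (k + internal l)..<internal (Node l r) + k]"
proof -
  have "[k..<internal (Node l r) + k] = [k..<internal l + k] @ [internal l + k..<internal (Node l r) + k]"
    using upt_add_eq_append [of k "internal l + k" "Suc (internal r)"] by (simp add: ac_simps)
  also have "[internal l + k..<internal (Node l r) + k] =
      (k + internal l) # [Suc (k + internal l)..<internal (Node l r) + k]"
    by (simp add: upt_conv_Cons ac_simps del: upt_Suc)
  finally have split: "[k..<internal (Node l r) + k] =
      [k..<internal l + k] @ (k + internal l) # [Suc (k + internal l)..<internal (Node l r) + k]" .
  have "map (name_entry_from (Node l r) k) [k..<internal l + k] =
      map (name_entry_from l k) [k..<internal l + k]"
    by (rule map_cong) (auto intro: name_entry_from_Node_left)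
  moreover have "map (name_entry_from (Node l r) k) [Suc (k + internal l)..<internal (Node l r) + k] =
      map (name_entry_from r (Suc (k + internal l))) [Suc (k + internal l)..<internal (Node l r) + k]"
    by (rule map_cong) (auto intro: name_entry_from_Node_right simp del: internal.simps)
  ultimately show ?thesis
    by (simp only: split map_append list.map name_entry_from_Node_root)
qed

lemma tree_name_eq_map_name_entry_from:
  "tree_name t = map (name_entry_from t (Suc 0)) [Suc 0..<internal t + Suc 0]"
  by (simp add: tree_name_def name_entry_def name_entry_from_def)

lemma map_name_entry_from_Node_eq_subtree_names:
  assumes "\<And>d. map (name_entry_from l (Suc d)) [Suc d..<internal l + Suc d] = map (\<lambda>x. x + d) (tree_name l)"
    and "\<And>d. map (name_entry_from r (Suc d)) [Suc d..<internal r + Suc d] = map (\<lambda>x. x + d) (tree_name r)"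
  shows "map (name_entry_from (Node l r) (Suc d)) [Suc d..<internal (Node l r) + Suc d] =
    map (\<lambda>x. x + d) (tree_name l) @ Suc d # map (\<lambda>x. x + Suc (internal l + d)) (tree_name r)"
proof -
  have "Suc (Suc d + internal l) = Suc (Suc (internal l + d))"
    and "internal (Node l r) + Suc d = internal r + Suc (Suc (internal l + d))"
    by simp_all
  then show ?thesis
    using map_name_entry_from_Node [of l r "Suc d"] assms(1) [of d] assms(2) [of "Suc (internal l + d)"]
    by (simp only:)
qed

lemma map_name_entry_from_eq_shift_tree_name:
  "map (name_entry_from t (Suc d)) [Suc d..<internal t + Suc d] = map (\<lambda>x. x + d) (tree_name t)"
proof (induction t arbitrary: d)
  case Leaf
  then show ?case by (simp add: tree_name_def)
next
  case (Node l r)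
  note Node_names = map_name_entry_from_Node_eq_subtree_names [OF Node.IH]
  have "tree_name (Node l r) = tree_name l @ Suc 0 # map (\<lambda>x. x + Suc (internal l)) (tree_name r)"
    using Node_names [of 0] by (simp add: tree_name_eq_map_name_entry_from [of "Node l r"])
  then show ?case
    by (simp only: Node_names) (simp add: ac_simps)
qed

lemma tree_name_Node:
  "tree_name (Node l r) = tree_name l @ 1 # map (\<lambda>x. x + Suc (internal l)) (tree_name r)"
  using map_name_entry_from_Node_eq_subtree_names [OF map_name_entry_from_eq_shift_tree_name
      map_name_entry_from_eq_shift_tree_name, where d = 0]
  by (simp add: tree_name_eq_map_name_entry_from [of "Node l r"])

lemma tree_name_Leaf: "tree_name Leaf = []"
  by (simp add: tree_name_def)

lemma length_tree_name: "length (tree_name t) = internal t"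
  by (simp add: tree_name_def)

lemma tree_name_pos: "x \<in> set (tree_name t) \<Longrightarrow> 0 < x"
  by (induction t arbitrary: x) (auto simp: tree_name_Node tree_name_Leaf)

lemma take_tree_name_is_tree_name:
  "k \<le> internal t \<Longrightarrow> \<exists>s. internal s = k \<and> tree_name s = take k (tree_name t)"
proof (induction t arbitrary: k)
  case Leaf
  then show ?case by (auto simp: tree_name_Leaf intro: exI [of _ Leaf])
next
  case (Node l r)
  show ?case
  proof (cases "k \<le> internal l")
    case True
    with Node.IH(1) obtain s where "internal s = k" "tree_name s = take k (tree_name l)"
      by blast
    with True show ?thesis by (auto simp: tree_name_Node length_tree_name)
  next
    case False
    then obtain k' where k': "k = Suc (internal l + k')"
      by (metis add_Suc_right less_imp_Suc_add not_le)
    with Node.prems Node.IH(2) [of k'] obtain s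
      where "internal s = k'" "tree_name s = take k' (tree_name r)"
      by auto
    with k' show ?thesis
      by (intro exI [of _ "Node l s"]) (simp add: tree_name_Node length_tree_name take_map)
  qed
qed

definition untri :: "nat \<Rightarrow> nat \<Rightarrow> nat" where
  "untri n x = (if n < x then x - n else 1)"

lemma tri_le_le_iff_untri:
  "0 < a \<Longrightarrow> 0 < x \<Longrightarrow> (tri n a \<le> x \<and> x \<le> a + n) \<longleftrightarrow> a = untri n x"
  by (auto simp: tri_def untri_def)

lemma untri_drop_tree_name_is_tree_name:
  "k \<le> internal t \<Longrightarrow>
    \<exists>s. internal s = internal t - k \<and> tree_name s = map (untri k) (drop k (tree_name t))"
proof (induction t arbitrary: k)
  case Leaf
  then show ?case by (auto simp: tree_name_Leaf intro: exI [of _ Leaf])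
next
  case (Node l r)
  show ?case
  proof (cases "k \<le> internal l")
    case True
    with Node.IH(1) obtain s
      where "internal s = internal l - k" "tree_name s = map (untri k) (drop k (tree_name l))"
      by blast
    with True show ?thesis
      by (intro exI [of _ "Node s r"])
        (auto simp: tree_name_Node length_tree_name untri_def Suc_diff_le)
  next
    case False
    then obtain k' where k': "k = Suc (internal l + k')"
      by (metis add_Suc_right less_imp_Suc_add not_le)
    with Node.prems Node.IH(2) [of k'] obtain s
      where "internal s = internal r - k'" "tree_name s = map (untri k') (drop k' (tree_name r))"
      by auto
    with k' show ?thesis
      by (intro exI [of _ s]) (simp add: tree_name_Node length_tree_name drop_map untri_def)
  qed
qed

lemma length_Nhat: "w \<in> Nhat k \<Longrightarrow> length w = k"
  by (auto simp: Nhat_def length_tree_name)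

lemma Nhat_pos: "w \<in> Nhat k \<Longrightarrow> x \<in> set w \<Longrightarrow> 0 < x"
  by (auto simp: Nhat_def dest: tree_name_pos)

lemma take_in_Nhat:
  assumes "w \<in> Nhat (n + m)"
  shows "take n w \<in> Nhat n"
proof -
  obtain t where "internal t = n + m" "w = tree_name t"
    using assms by (auto simp: Nhat_def)
  with take_tree_name_is_tree_name [of n t] obtain s
    where "internal s = n" "tree_name s = take n w"
    by auto
  then show ?thesis
    by (force simp: Nhat_def)
qed

lemma untri_drop_in_Nhat:
  assumes "w \<in> Nhat (n + m)"
  shows "map (untri n) (drop n w) \<in> Nhat m"
proof -
  obtain t where "internal t = n + m" "w = tree_name t"
    using assms by (auto simp: Nhat_def)
  with untri_drop_tree_name_is_tree_name [of n t] obtain s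
    where "internal s = m" "tree_name s = map (untri n) (drop n w)"
    by auto
  then show ?thesis
    by (force simp: Nhat_def)
qed

lemma cw_le_nearr_nwarr_iff:
  assumes "length u = n" and "length w = n + length v"
    and "\<forall>a \<in> set v. 0 < a" and "\<forall>x \<in> set w. 0 < x"
  shows "cw_le (nearr u v) w \<and> cw_le w (nwarr u v) \<longleftrightarrow>
    u = take n w \<and> v = map (untri n) (drop n w)"
proof -
  have "cw_le (nearr u v) w \<longleftrightarrow>
      list_all2 (\<le>) u (take n w) \<and> list_all2 (\<le>) (map (tri n) v) (drop n w)"
    unfolding cw_le_def nearr_def assms(1)
    by (subst append_take_drop_id [of n w, symmetric], rule list_all2_append) (simp add: assms)
  moreover have "cw_le w (nwarr u v) \<longleftrightarrow>
      list_all2 (\<le>) (take n w) u \<and> list_all2 (\<le>) (drop n w) (map (\<lambda>a. a + n) v)"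
    unfolding cw_le_def nwarr_def assms(1)
    by (subst append_take_drop_id [of n w, symmetric], rule list_all2_append) (simp add: assms)
  moreover have "list_all2 (\<le>) u (take n w) \<and> list_all2 (\<le>) (take n w) u \<longleftrightarrow> u = take n w"
    by (metis list_all2_antisym list_all2_refl order.antisym order.refl)
  moreover have "list_all2 (\<le>) (map (tri n) v) (drop n w) \<and>
      list_all2 (\<le>) (drop n w) (map (\<lambda>a. a + n) v) \<longleftrightarrow> v = map (untri n) (drop n w)"
  proof -
    have "list_all2 (\<le>) (map (tri n) v) (drop n w) \<and>
        list_all2 (\<le>) (drop n w) (map (\<lambda>a. a + n) v) \<longleftrightarrow>
        (\<forall>i < length v. tri n (v ! i) \<le> drop n w ! i \<and> drop n w ! i \<le> v ! i + n)"
      using assms(2) by (auto simp: list_all2_conv_all_nth)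
    also have "\<dots> \<longleftrightarrow> (\<forall>i < length v. v ! i = untri n (drop n w ! i))"
    proof -
      have "v ! i \<in> set v" "drop n w ! i \<in> set w" if "i < length v" for i
        using that assms(2) by (auto simp: in_set_dropD)
      with assms(3,4) show ?thesis
        by (simp add: tri_le_le_iff_untri)
    qed
    also have "\<dots> \<longleftrightarrow> v = map (untri n) (drop n w)"
      using assms(2) by (auto intro: nth_equalityI)
    finally show ?thesis .
  qed
  ultimately show ?thesis by blast
qed

definition split_name :: "nat \<Rightarrow> nat list \<Rightarrow> nat list \<times> nat list" where
  "split_name n w = (take n w, map (untri n) (drop n w))"

lemma split_name_in_Nhat: "w \<in> Nhat (n + m) \<Longrightarrow> split_name n w \<in> Nhat n \<times> Nhat m"
  by (simp add: split_name_def take_in_Nhat untri_drop_in_Nhat)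

lemma between_nearr_nwarr_iff_split_name:
  assumes "u \<in> Nhat n" and "v \<in> Nhat m" and "w \<in> Nhat (n + m)"
  shows "cw_le (nearr u v) w \<and> cw_le w (nwarr u v) \<longleftrightarrow> (u, v) = split_name n w"
  using cw_le_nearr_nwarr_iff [of u n w v] assms
  by (simp add: split_name_def length_Nhat Nhat_pos)

lemma mem_Nint_nearr_nwarr_iff:
  assumes "p \<in> Nhat n \<times> Nhat m"
  shows "w \<in> Nint (n + m) (nearr (fst p) (snd p)) (nwarr (fst p) (snd p)) \<longleftrightarrow>
    w \<in> Nhat (n + m) \<and> p = split_name n w"
proof (cases p)
  case (Pair u v)
  then show ?thesis
    using assms between_nearr_nwarr_iff_split_name [of u n v m w] by (auto simp: Nint_def)
qed

theorem mainTheorem13: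
  fixes n m :: nat
  assumes "n \<ge> 1" and "m \<ge> 1"
  shows "(\<forall>w \<in> Nhat (n + m). \<exists>!(u, v). u \<in> Nhat n \<and> v \<in> Nhat m \<and>
            cw_le (nearr u v) w \<and> cw_le w (nwarr u v))
       \<and> (\<Union>(u, v) \<in> Nhat n \<times> Nhat m. Nint (n + m) (nearr u v) (nwarr u v)) = Nhat (n + m)
       \<and> (\<forall>p \<in> Nhat n \<times> Nhat m. \<forall>q \<in> Nhat n \<times> Nhat m. p \<noteq> q \<longrightarrow>
            Nint (n + m) (nearr (fst p) (snd p)) (nwarr (fst p) (snd p)) \<inter>
            Nint (n + m) (nearr (fst q) (snd q)) (nwarr (fst q) (snd q)) = {})"
proof (intro conjI ballI impI)
  fix w assume w: "w \<in> Nhat (n + m)"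
  show "\<exists>!(u, v). u \<in> Nhat n \<and> v \<in> Nhat m \<and> cw_le (nearr u v) w \<and> cw_le w (nwarr u v)"
  proof -
    obtain u v where uv: "split_name n w = (u, v)" by fastforce
    show ?thesis
      using split_name_in_Nhat [OF w] between_nearr_nwarr_iff_split_name [OF _ _ w]
      by (intro ex1I [of _ "(u, v)"]) (auto simp: uv)
  qed
next
  show "(\<Union>(u, v) \<in> Nhat n \<times> Nhat m. Nint (n + m) (nearr u v) (nwarr u v)) = Nhat (n + m)"
    using split_name_in_Nhat mem_Nint_nearr_nwarr_iff [where n = n and m = m] by fastforce
next
  fix p q assume p: "p \<in> Nhat n \<times> Nhat m" and q: "q \<in> Nhat n \<times> Nhat m" and "p \<noteq> q"
  show "Nint (n + m) (nearr (fst p) (snd p)) (nwarr (fst p) (snd p)) \<inter>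
      Nint (n + m) (nearr (fst q) (snd q)) (nwarr (fst q) (snd q)) = {}"
  proof (rule equals0I)
    fix w assume "w \<in> Nint (n + m) (nearr (fst p) (snd p)) (nwarr (fst p) (snd p)) \<inter>
      Nint (n + m) (nearr (fst q) (snd q)) (nwarr (fst q) (snd q))"
    then have "p = split_name n w" and "q = split_name n w"
      using mem_Nint_nearr_nwarr_iff [OF p] mem_Nint_nearr_nwarr_iff [OF q] by simp_all
    with \<open>p \<noteq> q\<close> show False by simp
  qed
qed

end
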